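(* Let $\mathcal{H}$ be a real Hilbert space, let $A_1, A_2:\mathcal{H}\to 2^{\mathcal{H}}$ be maximally monotone, let $B:\mathcal{H}\to\mathcal{H}$ be monotone and $L$-Lipschitz continuous ($L>0$), let $C:\mathcal{H}\to\mathcal{H}$ be $\beta$-cocoercive ($\beta>0$), and let $\gamma>0$. Let $z_0, y_0, y_{-1}\in\mathcal{H}$ and define sequences $\{x_n\},\{y_n\},\{z_n\}$ for $n\ge 0$ by $$x_{n+1}=J_{\gamma A_1}z_n,\qquad y_{n+1}=J_{\gamma A_2}\big(2x_{n+1}-z_n-2\gamma By_n+\gamma By_{n-1}-\gamma Cy_n\big),\qquad z_{n+1}=z_n+y_{n+1}-x_{n+1}.$$ Suppose that there exist $x,z\in\mathcal{H}$ such that $z-x\in\gamma A_1x$ and $x-z\in\gamma(A_2+B+C)x$. Then for all $n\in\mathbb{N}$, $$\|z_{n+1}-z\|^2+2\gamma\langle By_{n+1}-By_n,x-y_{n+1}\rangle+\|z_{n+1}-z_n\|^2 \le \|z_n-z\|^2+2\gamma\langle By_n-By_{n-1},x-y_n\rangle+2\gamma\langle By_n-By_{n-1},y_n-y_{n+1}\rangle+2\gamma\langle Cy_n-Cx,x-y_{n+1}\rangle.$$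
   Context: For a maximally monotone operator $A$ and $\gamma>0$, $J_{\gamma A}=(\mathrm{Id}+\gamma A)^{-1}$ is the resolvent (single-valued, defined on all of $\mathcal{H}$). An operator $C$ is $\beta$-cocoercive if $\langle x-y,Cx-Cy\rangle\ge\beta\|Cx-Cy\|^2$ for all $x,y$. *)

theory Defs
  imports "HOL-Analysis.Analysis"
begin

definition monotone_op :: "('a::real_inner \<Rightarrow> 'a set) \<Rightarrow> bool" where
  "monotone_op A \<longleftrightarrow> (\<forall>x y u v. u \<in> A x \<longrightarrow> v \<in> A y \<longrightarrow> inner (x - y) (u - v) \<ge> 0)"

definition maximally_monotone :: "('a::real_inner \<Rightarrow> 'a set) \<Rightarrow> bool" where
  "maximally_monotone A \<longleftrightarrow> monotone_op A \<and>
     (\<forall>x u. (\<forall>y v. v \<in> A y \<longrightarrow> inner (x - y) (u - v) \<ge> 0) \<longrightarrow> u \<in> A x)"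

text \<open>Resolvent J_{gamma A} = (Id + gamma A)^{-1}: the (unique, for maximally monotone A)
  point p with x in p + gamma A p.\<close>
definition resolvent :: "real \<Rightarrow> ('a::real_inner \<Rightarrow> 'a set) \<Rightarrow> 'a \<Rightarrow> 'a" where
  "resolvent \<gamma> A x = (THE p. x - p \<in> (\<lambda>u. \<gamma> *\<^sub>R u) ` A p)"

definition monotone_single :: "('a::real_inner \<Rightarrow> 'a) \<Rightarrow> bool" where
  "monotone_single B \<longleftrightarrow> (\<forall>x y. inner (x - y) (B x - B y) \<ge> 0)"

definition lipschitz_op :: "real \<Rightarrow> ('a::real_normed_vector \<Rightarrow> 'a) \<Rightarrow> bool" where
  "lipschitz_op L B \<longleftrightarrow> (\<forall>x y. norm (B x - B y) \<le> L * norm (x - y))"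

definition cocoercive :: "real \<Rightarrow> ('a::real_inner \<Rightarrow> 'a) \<Rightarrow> bool" where
  "cocoercive \<beta> C \<longleftrightarrow> (\<forall>x y. inner (x - y) (C x - C y) \<ge> \<beta> * (norm (C x - C y))\<^sup>2)"

end

theory Submission
  imports Defs
begin

(* Subtracting the inclusions z_n - x_{n+1} in gamma A1 x_{n+1} and
   w_n - y_{n+1} in gamma A2 y_{n+1} (w_n the argument of the second resolvent) from the
   inclusions at the solution (x, z), monotonicity of A1, A2 and B yields three nonnegative
   inner products. Since z_{n+1} - z_n = y_{n+1} - x_{n+1}, twice their sum is exactly the
   difference of the two sides of the estimate.

   Those inclusions need the resolvents to be everywhere defined, i.e. Minty's theorem. For a
   monotone graph and a point w, consider the balls with diameter [y, w - gamma v], (y, v) in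
   the graph. Finitely many of them meet: minimise the largest of the defining quadratics over
   the convex hull of the centres. In a Hilbert space, closed bounded convex sets with the
   finite intersection property meet (the near-minimal-norm points of a growing chain of
   finite intersections shrink to a single point), so all of the balls meet, and maximality
   puts any common point p into the graph in the form (p, (w - p) / gamma). *)

lemma monotone_opD:
  assumes "monotone_op A" "u \<in> A x" "v \<in> A y"
  shows "0 \<le> inner (x - y) (u - v)"
  using assms unfolding monotone_op_def by blast

lemma maximally_monotone_imp_monotone_op:
  "maximally_monotone A \<Longrightarrow> monotone_op A"
  unfolding maximally_monotone_def by blast

lemma monotone_op_scaleR_image:
  assumes "monotone_op A" "0 \<le> \<gamma>"
    and "u \<in> (\<lambda>a. \<gamma> *\<^sub>R a) ` A x" "v \<in> (\<lambda>a. \<gamma> *\<^sub>R a) ` A y"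
  shows "0 \<le> inner (x - y) (u - v)"
proof -
  obtain a b where "a \<in> A x" "b \<in> A y" "u = \<gamma> *\<^sub>R a" "v = \<gamma> *\<^sub>R b"
    using assms(3,4) by blast
  then show ?thesis
    using monotone_opD[OF assms(1)] assms(2)
    by (simp add: scaleR_diff_right[symmetric])
qed

section \<open>Balls with a given diameter\<close>

lemma inner_diameter_eq:
  fixes p y c :: "'a::real_inner"
  shows "inner (p - y) (c - p) = (dist y c / 2)\<^sup>2 - (dist p (midpoint y c))\<^sup>2"
  unfolding dist_norm midpoint_def power_divide power2_norm_eq_inner
  by (simp add: inner_add_left inner_add_right inner_diff_left inner_diff_right inner_commute
      field_simps)

lemma diameter_ball_eq:
  fixes y c :: "'a::real_inner"
  shows "{p. 0 \<le> inner (p - y) (c - p)} = cball (midpoint y c) (dist y c / 2)"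
proof -
  have "0 \<le> inner (p - y) (c - p) \<longleftrightarrow> dist (midpoint y c) p \<le> dist y c / 2" for p
  proof -
    have "0 \<le> inner (p - y) (c - p) \<longleftrightarrow> (dist p (midpoint y c))\<^sup>2 \<le> (dist y c / 2)\<^sup>2"
      unfolding inner_diameter_eq by simp
    also have "\<dots> \<longleftrightarrow> dist (midpoint y c) p \<le> dist y c / 2"
      using power2_le_iff_abs_le[of "dist y c / 2" "dist p (midpoint y c)"]
      by (simp add: dist_commute)
    finally show ?thesis .
  qed
  then show ?thesis
    unfolding mem_cball[symmetric] by blast
qed

lemma continuous_on_Max:
  fixes f :: "'i \<Rightarrow> 'a::topological_space \<Rightarrow> 'b::linorder_topology"
  assumes "finite I" "I \<noteq> {}" "\<And>i. i \<in> I \<Longrightarrow> continuous_on S (f i)"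
  shows "continuous_on S (\<lambda>p. MAX i\<in>I. f i p)"
  using assms
proof (induction I rule: finite_ne_induct)
  case (insert i I)
  have max_insert: "(\<lambda>p. MAX j\<in>insert i I. f j p) = (\<lambda>p. max (f i p) (MAX j\<in>I. f j p))"
    using insert.hyps by simp
  then show ?case
    unfolding max_insert using insert.IH insert.prems by (intro continuous_on_max) auto
qed simp

lemma weighted_double_sum_inner_diff:
  fixes y c :: "'i \<Rightarrow> 'a::real_inner"
  assumes "sum l J = 1"
  shows "(\<Sum>i\<in>J. \<Sum>j\<in>J. l i * l j * inner (y i - y j) (c i - c j))
    = 2 * ((\<Sum>i\<in>J. l i * inner (y i) (c i)) - inner (\<Sum>i\<in>J. l i *\<^sub>R y i) (\<Sum>i\<in>J. l i *\<^sub>R c i))"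
proof -
  define ym where "ym = (\<Sum>i\<in>J. l i *\<^sub>R y i)"
  define cm where "cm = (\<Sum>i\<in>J. l i *\<^sub>R c i)"
  define t where "t = (\<Sum>i\<in>J. l i * inner (y i) (c i))"
  have sum_l_mult: "(\<Sum>i\<in>J. l i * r) = r" for r
    using assms by (simp add: sum_distrib_right[symmetric])
  have "(\<Sum>j\<in>J. l i * l j * inner (y i - y j) (c i - c j))
      = l i * (inner (y i) (c i) - inner (y i) cm - inner ym (c i) + t)" for i
  proof -
    have "(\<Sum>j\<in>J. l j * inner (y i) (c j)) = inner (y i) cm"
      unfolding cm_def by (simp add: inner_sum_right)
    moreover have "(\<Sum>j\<in>J. l j * inner (y j) (c i)) = inner ym (c i)"
      unfolding ym_def by (simp add: inner_sum_left)
    ultimately have "(\<Sum>j\<in>J. l j * inner (y i - y j) (c i - c j))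
        = inner (y i) (c i) - inner (y i) cm - inner ym (c i) + t"
      unfolding t_def using sum_l_mult[of "inner (y i) (c i)"]
      by (simp add: inner_diff_left inner_diff_right right_diff_distrib distrib_left
          sum.distrib sum_subtractf)
    then show ?thesis
      by (simp add: sum_distrib_left[symmetric] mult.assoc)
  qed
  moreover have "(\<Sum>i\<in>J. l i * (inner (y i) (c i) - inner (y i) cm - inner ym (c i) + t))
      = 2 * (t - inner ym cm)"
  proof -
    have "(\<Sum>i\<in>J. l i * inner (y i) cm) = inner ym cm"
      unfolding ym_def by (simp add: inner_sum_left)
    moreover have "(\<Sum>i\<in>J. l i * inner ym (c i)) = inner ym cm"
      unfolding cm_def by (simp add: inner_sum_right)
    ultimately show ?thesis
      using sum_l_mult[of t] unfolding t_def[symmetric]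
      by (simp add: right_diff_distrib distrib_left sum.distrib sum_subtractf t_def)
  qed
  ultimately show ?thesis
    unfolding ym_def[symmetric] cm_def[symmetric] t_def[symmetric] by simp
qed

lemma convex_combination_of_midpoints_inner_nonneg:
  fixes y c :: "'i \<Rightarrow> 'a::real_inner"
  assumes l: "\<And>i. i \<in> J \<Longrightarrow> 0 \<le> l i" "sum l J = 1"
    and anti: "\<And>i j. i \<in> J \<Longrightarrow> j \<in> J \<Longrightarrow> inner (y i - y j) (c i - c j) \<le> 0"
    and p: "p = (\<Sum>i\<in>J. l i *\<^sub>R midpoint (y i) (c i))"
  shows "0 \<le> (\<Sum>i\<in>J. l i * inner (p - y i) (c i - p))"
proof -
  define ym where "ym = (\<Sum>i\<in>J. l i *\<^sub>R y i)"
  define cm where "cm = (\<Sum>i\<in>J. l i *\<^sub>R c i)"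
  define t where "t = (\<Sum>i\<in>J. l i * inner (y i) (c i))"
  have "(\<Sum>i\<in>J. \<Sum>j\<in>J. l i * l j * inner (y i - y j) (c i - c j)) \<le> 0"
    using l anti by (intro sum_nonpos) (simp add: mult_nonneg_nonpos)
  then have "t \<le> inner ym cm"
    unfolding weighted_double_sum_inner_diff[OF l(2)] ym_def cm_def t_def by simp
  have "(\<Sum>i\<in>J. l i * inner (p - y i) (c i - p))
      = (\<Sum>i\<in>J. l i * inner p (c i)) + (\<Sum>i\<in>J. l i * inner (y i) p) - (\<Sum>i\<in>J. l i) * inner p p - t"
    unfolding t_def
    by (simp add: inner_diff_left inner_diff_right right_diff_distrib distrib_left
        sum.distrib sum_subtractf sum_distrib_right)
  also have "\<dots> = inner p cm + inner ym p - inner p p - t"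
    unfolding ym_def cm_def l(2) by (simp add: inner_sum_left inner_sum_right)
  also have "\<dots> = inner ym cm - t + (dist ym cm / 2)\<^sup>2"
  proof -
    have "p = midpoint ym cm"
      unfolding p ym_def cm_def
      by (simp add: midpoint_def scaleR_add_right sum.distrib scaleR_sum_right)
    then show ?thesis
      unfolding midpoint_def dist_norm power_divide power2_norm_eq_inner
      by (simp add: inner_add_left inner_add_right inner_diff_left inner_diff_right inner_commute
          field_simps)
  qed
  finally show ?thesis
    using \<open>t \<le> inner ym cm\<close> zero_le_power2[of "dist ym cm / 2"] by linarith
qed

lemma closest_point_eventually_closer:
  fixes H :: "'a::real_inner set"
  assumes "convex H" "closed H" and q: "q \<in> H" "\<forall>x\<in>H. dist p q \<le> dist p x"
    and "p \<notin> H" "m \<in> H"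
  shows "eventually (\<lambda>t. dist (p + t *\<^sub>R (q - p)) m < dist p m) (at_right 0)"
proof -
  have "inner (p - q) (m - q) \<le> 0"
    using any_closest_point_dot[OF assms(1,2) q(1) \<open>m \<in> H\<close> q(2)] .
  moreover have "inner (m - p) (q - p) = inner (q - p) (q - p) - inner (p - q) (m - q)"
    by (simp add: inner_diff_left inner_diff_right inner_commute algebra_simps)
  moreover have "0 < inner (q - p) (q - p)" using q(1) \<open>p \<notin> H\<close> by auto
  ultimately have "0 < inner (m - p) (q - p)" by linarith
  then obtain u where "0 < u" and u: "\<And>t. 0 < t \<Longrightarrow> t \<le> u \<Longrightarrow> norm (t *\<^sub>R (q - p) - (m - p)) < norm (m - p)"
    using closer_points_lemma by blast
  have "dist (p + t *\<^sub>R (q - p)) m < dist p m" if "0 < t" "t < u" for t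
    using u[of t] that by (simp add: dist_norm algebra_simps norm_minus_commute)
  then show ?thesis
    unfolding eventually_at_right_field using \<open>0 < u\<close> by blast
qed

lemma minimax_point_in_active_hull:
  fixes m :: "'i \<Rightarrow> 'a::real_inner" and a :: "'i \<Rightarrow> real"
  defines "f \<equiv> \<lambda>i q. (dist q (m i))\<^sup>2 + a i"
  assumes I: "finite I"
    and ps: "ps \<in> convex hull (m ` I)"
    and below: "\<And>i. i \<in> I \<Longrightarrow> f i ps \<le> s"
    and minimal: "\<And>q. q \<in> convex hull (m ` I) \<Longrightarrow> \<exists>i\<in>I. s \<le> f i q"
  shows "ps \<in> convex hull (m ` {i\<in>I. f i ps = s})"
proof (rule ccontr)
  \<comment> \<open>Otherwise a small step from ps towards the nearest point q of the hull H of the active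
    centres decreases every active f i, and keeps the inactive ones below s by continuity.\<close>
  define J where "J = {i\<in>I. f i ps = s}"
  define H where "H = convex hull (m ` J)"
  assume "ps \<notin> convex hull (m ` {i\<in>I. f i ps = s})"
  then have ps_H: "ps \<notin> H" unfolding H_def J_def .
  have "J \<noteq> {}"
    using minimal[OF ps] below unfolding J_def by force
  then have "H \<noteq> {}" unfolding H_def by simp
  have "compact H"
    unfolding H_def J_def using I by (simp add: finite_imp_compact_convex_hull)
  moreover have "continuous_on H (dist ps)"
    by (intro continuous_intros)
  ultimately obtain q where q: "q \<in> H" and closest: "\<forall>x\<in>H. dist ps q \<le> dist ps x"
    using continuous_attains_inf[OF _ \<open>H \<noteq> {}\<close>] by blast
  have "eventually (\<lambda>t. \<forall>i\<in>I. f i (ps + t *\<^sub>R (q - ps)) < s) (at_right 0)"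
  proof (rule eventually_ball_finite[OF I], intro ballI)
    fix i assume "i \<in> I"
    show "eventually (\<lambda>t. f i (ps + t *\<^sub>R (q - ps)) < s) (at_right 0)"
    proof (cases "i \<in> J")
      case True
      then have s: "s = (dist ps (m i))\<^sup>2 + a i" unfolding J_def f_def by simp
      from True have "m i \<in> H" unfolding H_def by (simp add: hull_inc)
      with closest_point_eventually_closer[OF _ compact_imp_closed[OF \<open>compact H\<close>] q closest ps_H]
      have "eventually (\<lambda>t. dist (ps + t *\<^sub>R (q - ps)) (m i) < dist ps (m i)) (at_right 0)"
        unfolding H_def by simp
      then show ?thesis
        unfolding s f_def by (elim eventually_mono) (simp add: power_strict_mono)
    next
      case False
      have "((\<lambda>t. f i (ps + t *\<^sub>R (q - ps))) \<longlongrightarrow> f i (ps + 0 *\<^sub>R (q - ps))) (at_right 0)"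
        unfolding f_def by (intro tendsto_intros)
      moreover have "f i ps < s" using False \<open>i \<in> I\<close> below unfolding J_def by force
      ultimately show ?thesis by (simp add: order_tendstoD)
    qed
  qed
  then obtain b where "0 < b" and b: "\<And>t. 0 < t \<Longrightarrow> t < b \<Longrightarrow> \<forall>i\<in>I. f i (ps + t *\<^sub>R (q - ps)) < s"
    unfolding eventually_at_right_field by auto
  define t where "t = min 1 (b / 2)"
  have t: "0 < t" "t \<le> 1" "t < b" using \<open>0 < b\<close> unfolding t_def by auto
  have "H \<subseteq> convex hull (m ` I)"
    unfolding H_def J_def by (intro hull_mono) auto
  then have "(1 - t) *\<^sub>R ps + t *\<^sub>R q \<in> convex hull (m ` I)"
    using ps q t by (intro convexD) auto
  then have "ps + t *\<^sub>R (q - ps) \<in> convex hull (m ` I)"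
    by (simp add: algebra_simps)
  then show False
    using minimal b[OF t(1,3)] by fastforce
qed

lemma finite_minimax_point:
  fixes f :: "'i \<Rightarrow> 'a::topological_space \<Rightarrow> real"
  assumes I: "finite I" "I \<noteq> {}" and K: "compact K" "K \<noteq> {}"
    and cont: "\<And>i. continuous_on K (f i)"
  obtains ps s where "ps \<in> K" "\<And>i. i \<in> I \<Longrightarrow> f i ps \<le> s" "\<And>q. q \<in> K \<Longrightarrow> \<exists>i\<in>I. s \<le> f i q"
proof -
  have "continuous_on K (\<lambda>q. MAX i\<in>I. f i q)"
    using I cont by (intro continuous_on_Max)
  then obtain ps where ps: "ps \<in> K" and ps_min: "\<And>q. q \<in> K \<Longrightarrow> (MAX i\<in>I. f i ps) \<le> (MAX i\<in>I. f i q)"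
    using continuous_attains_inf[OF K] by blast
  show ?thesis
  proof (rule that[OF ps])
    show "f i ps \<le> (MAX i\<in>I. f i ps)" if "i \<in> I" for i
      using I that by (intro Max_ge) auto
    show "\<exists>i\<in>I. (MAX i\<in>I. f i ps) \<le> f i q" if "q \<in> K" for q
    proof -
      have "(MAX i\<in>I. f i q) \<in> (\<lambda>i. f i q) ` I" using I by (intro Max_in) auto
      then show ?thesis using ps_min[OF that] by fastforce
    qed
  qed
qed

lemma diameter_balls_common_point:
  fixes y c :: "'i \<Rightarrow> 'a::real_inner"
  assumes I: "finite I"
    and anti: "\<And>i j. i \<in> I \<Longrightarrow> j \<in> I \<Longrightarrow> inner (y i - y j) (c i - c j) \<le> 0"
  shows "\<exists>p. \<forall>i\<in>I. 0 \<le> inner (p - y i) (c i - p)"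
proof (cases "I = {}")
  case False
  define m where "m i = midpoint (y i) (c i)" for i
  define a where "a i = - (dist (y i) (c i) / 2)\<^sup>2" for i
  define f where "f i q = (dist q (m i))\<^sup>2 + a i" for i q
  have f_eq: "f i q = - inner (q - y i) (c i - q)" for i q
    unfolding f_def a_def m_def inner_diameter_eq by simp
  define K where "K = convex hull (m ` I)"
  have "compact K" "K \<noteq> {}"
    unfolding K_def using I False by (auto simp: finite_imp_compact_convex_hull)
  moreover have "continuous_on K (f i)" for i
    unfolding f_def by (intro continuous_intros)
  ultimately obtain ps s where ps: "ps \<in> K" and below: "\<And>i. i \<in> I \<Longrightarrow> f i ps \<le> s"
    and minimal: "\<And>q. q \<in> K \<Longrightarrow> \<exists>i\<in>I. s \<le> f i q"
    using finite_minimax_point[OF I False] by metis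
  define J where "J = {i\<in>I. f i ps = s}"
  have "ps \<in> convex hull (\<Union>i\<in>J. {m i})"
    using minimax_point_in_active_hull[of I ps m a s] I ps below minimal
    unfolding UNION_singleton_eq_range J_def K_def f_def by simp
  moreover have "finite J" unfolding J_def using I by simp
  ultimately obtain l m' where l: "\<forall>i\<in>J. 0 \<le> l i" "sum l J = 1"
    and m': "\<forall>i\<in>J. m' i \<in> {m i}" and ps_eq': "ps = (\<Sum>i\<in>J. l i *\<^sub>R m' i)"
    using convex_hull_finite_union[of J "\<lambda>i. {m i}"] by blast
  have ps_eq: "ps = (\<Sum>i\<in>J. l i *\<^sub>R m i)"
    unfolding ps_eq' using m' by (intro sum.cong) auto
  have "0 \<le> (\<Sum>i\<in>J. l i * inner (ps - y i) (c i - ps))"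
    using l anti ps_eq unfolding J_def m_def
    by (intro convex_combination_of_midpoints_inner_nonneg) auto
  also have "\<dots> = (\<Sum>i\<in>J. l i * - s)"
    using f_eq unfolding J_def by (intro sum.cong) (auto simp: f_eq)
  also have "\<dots> = (\<Sum>i\<in>J. l i) * - s"
    by (rule sum_distrib_right[symmetric])
  also have "\<dots> = - s"
    using l(2) by simp
  finally have "s \<le> 0" by simp
  have "0 \<le> inner (ps - y i) (c i - ps)" if "i \<in> I" for i
    using below[OF that] \<open>s \<le> 0\<close> f_eq[of i ps] by linarith
  then show ?thesis by blast
qed simp

section \<open>Closed bounded convex sets in a Hilbert space\<close>

lemma dist_le_of_near_minimal_norm:
  fixes x x' :: "'a::real_inner"
  assumes "convex S" "x \<in> S" "x' \<in> S" and low: "\<And>z. z \<in> S \<Longrightarrow> D \<le> (norm z)\<^sup>2"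
    and "(norm x)\<^sup>2 \<le> D + e" "(norm x')\<^sup>2 \<le> D + e"
  shows "(dist x x')\<^sup>2 \<le> 4 * e"
proof -
  have "(1/2) *\<^sub>R x + (1/2) *\<^sub>R x' \<in> S"
    using assms(1-3) by (intro convexD) auto
  then have "midpoint x x' \<in> S" by (simp add: midpoint_def scaleR_add_right)
  then have "D \<le> (norm (midpoint x x'))\<^sup>2" by (rule low)
  moreover have "(dist x x')\<^sup>2 = 2 * (norm x)\<^sup>2 + 2 * (norm x')\<^sup>2 - 4 * (norm (midpoint x x'))\<^sup>2"
    unfolding dist_norm midpoint_def power2_norm_eq_inner
    by (simp add: inner_add_left inner_add_right inner_diff_left inner_diff_right inner_commute
        field_simps)
  ultimately show ?thesis using assms(5,6) by linarith
qed

lemma nested_near_minimal_norm_Ex1: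
  fixes S :: "nat \<Rightarrow> 'a::{real_inner,complete_space} set"
  assumes closed: "\<And>n. closed (S n)" and convex: "\<And>n. convex (S n)"
    and nested: "\<And>m n. m \<le> n \<Longrightarrow> S n \<subseteq> S m"
    and low: "\<And>n z. z \<in> S n \<Longrightarrow> \<delta> - e n \<le> (norm z)\<^sup>2"
    and near: "\<And>n. \<exists>z\<in>S n. (norm z)\<^sup>2 \<le> \<delta> + e n"
    and e: "decseq e" "e \<longlonglongrightarrow> 0"
  shows "\<exists>!a. \<forall>n. a \<in> S n \<and> (norm a)\<^sup>2 \<le> \<delta> + e n"
proof -
  define T where "T n = S n \<inter> {z. (norm z)\<^sup>2 \<le> \<delta> + e n}" for n
  have diam: "(dist x x')\<^sup>2 \<le> 8 * e n" if "x \<in> T n" "x' \<in> T n" for x x' n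
    using dist_le_of_near_minimal_norm[OF convex, of x n x' "\<delta> - e n" "2 * e n"] low that
    unfolding T_def by auto
  have e8: "(\<lambda>n. 8 * e n) \<longlonglongrightarrow> 0"
    using tendsto_mult_right_zero[OF e(2)] by simp
  have small: "\<exists>n. 8 * e n < \<epsilon>" if "0 < \<epsilon>" for \<epsilon>
  proof -
    from e8 have "eventually (\<lambda>n. 8 * e n < \<epsilon>) sequentially" using that by (rule order_tendstoD)
    then show ?thesis by (auto simp: eventually_sequentially)
  qed
  obtain a where a: "\<And>n. a \<in> T n"
  proof (rule decreasing_closed_nest)
    show "closed (T n)" for n
      unfolding T_def using closed by (intro closed_Int closed_Collect_le continuous_intros) auto
    show "T n \<noteq> {}" for n using near[of n] unfolding T_def by auto
    show "T n \<subseteq> T m" if "m \<le> n" for m n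
      using nested[OF that] e(1) that unfolding T_def decseq_def by fastforce
    show "\<exists>n. \<forall>x\<in>T n. \<forall>y\<in>T n. dist x y < \<epsilon>" if "0 < \<epsilon>" for \<epsilon>
    proof -
      obtain n where n: "8 * e n < \<epsilon>\<^sup>2" using small[of "\<epsilon>\<^sup>2"] \<open>0 < \<epsilon>\<close> by auto
      have "dist x y < \<epsilon>" if "x \<in> T n" "y \<in> T n" for x y
        using diam[OF that] n \<open>0 < \<epsilon>\<close> by (smt (verit) power_mono zero_le_dist)
      then show ?thesis by blast
    qed
  qed (rule that)
  moreover have "a' = a" if "\<And>n. a' \<in> T n" for a'
  proof -
    have "(dist a' a)\<^sup>2 \<le> 8 * e n" for n using diam[OF that a] .
    then have "(dist a' a)\<^sup>2 \<le> 0"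
      using e8 by (intro tendsto_lowerbound[OF e8]) auto
    then show ?thesis by simp
  qed
  ultimately show ?thesis unfolding T_def by blast
qed

lemma finite_subfamilies_min_norm_sup:
  fixes K0 :: "'a::real_inner set" and \<F> :: "'a set set"
  assumes K0: "bounded K0"
    and fip: "\<And>\<G>. finite \<G> \<Longrightarrow> \<G> \<subseteq> \<F> \<Longrightarrow> K0 \<inter> \<Inter>\<G> \<noteq> {}"
  obtains \<delta> where
    "\<And>\<G> e. finite \<G> \<Longrightarrow> \<G> \<subseteq> \<F> \<Longrightarrow> 0 < e \<Longrightarrow> \<exists>z\<in>K0 \<inter> \<Inter>\<G>. (norm z)\<^sup>2 < \<delta> + e"
    "\<And>e. 0 < e \<Longrightarrow> \<exists>\<G>. finite \<G> \<and> \<G> \<subseteq> \<F> \<and> (\<forall>z\<in>K0 \<inter> \<Inter>\<G>. \<delta> - e < (norm z)\<^sup>2)"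
proof -
  let ?fin = "{\<G>. finite \<G> \<and> \<G> \<subseteq> \<F>}"
  define D where "D \<G> = (INF z\<in>K0 \<inter> \<Inter>\<G>. (norm z)\<^sup>2)" for \<G>
  have bdd: "bdd_below ((\<lambda>z. (norm z)\<^sup>2) ` (K0 \<inter> \<Inter>\<G>))" for \<G>
    by (rule bdd_belowI[of _ 0]) auto
  have D_le: "D \<G> \<le> (norm z)\<^sup>2" if "z \<in> K0 \<inter> \<Inter>\<G>" for z \<G>
    unfolding D_def using that bdd by (intro cINF_lower) auto
  have D_near: "\<exists>z\<in>K0 \<inter> \<Inter>\<G>. (norm z)\<^sup>2 < D \<G> + e" if "\<G> \<in> ?fin" "0 < e" for \<G> e
    using cInf_less_iff[OF _ bdd, of \<G> "D \<G> + e"] fip that unfolding D_def by auto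
  obtain R where R: "\<And>z. z \<in> K0 \<Longrightarrow> norm z \<le> R" using K0 unfolding bounded_iff by blast
  have "D \<G> \<le> R\<^sup>2" if "\<G> \<in> ?fin" for \<G>
  proof -
    from fip that obtain z where z: "z \<in> K0 \<inter> \<Inter>\<G>" by blast
    then have "norm z \<le> R" using R by auto
    then show ?thesis using D_le[OF z] norm_ge_zero[of z] by (smt (verit) power_mono)
  qed
  then have bdd_D: "bdd_above (D ` ?fin)" by (intro bdd_aboveI2) auto
  have fin_ne: "?fin \<noteq> {}" by blast
  show ?thesis
  proof (rule that[of "SUP \<G>\<in>?fin. D \<G>"])
    fix \<G> and e :: real
    assume "finite \<G>" "\<G> \<subseteq> \<F>" "0 < e"
    then obtain z where z: "z \<in> K0 \<inter> \<Inter>\<G>" "(norm z)\<^sup>2 < D \<G> + e"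
      using D_near[of \<G> e] by blast
    have "D \<G> \<le> (SUP \<G>\<in>?fin. D \<G>)"
      using bdd_D \<open>finite \<G>\<close> \<open>\<G> \<subseteq> \<F>\<close> by (intro cSUP_upper) auto
    with z show "\<exists>z\<in>K0 \<inter> \<Inter>\<G>. (norm z)\<^sup>2 < (SUP \<G>\<in>?fin. D \<G>) + e"
      by (intro bexI[of _ z]) auto
  next
    fix e :: real
    assume "0 < e"
    then obtain \<G> where "\<G> \<in> ?fin" "(SUP \<G>\<in>?fin. D \<G>) - e < D \<G>"
      using less_cSUP_iff[OF fin_ne bdd_D, of "(SUP \<G>\<in>?fin. D \<G>) - e"] by auto
    then show "\<exists>\<G>. finite \<G> \<and> \<G> \<subseteq> \<F> \<and> (\<forall>z\<in>K0 \<inter> \<Inter>\<G>. (SUP \<G>\<in>?fin. D \<G>) - e < (norm z)\<^sup>2)"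
      using D_le by (metis (mono_tags, lifting) mem_Collect_eq order_less_le_trans)
  qed
qed

lemma finite_subfamilies_min_norm_chain:
  fixes K0 :: "'a::real_inner set" and \<F> :: "'a set set"
  assumes K0: "bounded K0"
    and fip: "\<And>\<G>. finite \<G> \<Longrightarrow> \<G> \<subseteq> \<F> \<Longrightarrow> K0 \<inter> \<Inter>\<G> \<noteq> {}"
  obtains U \<delta> where "\<And>n. finite (U n) \<and> U n \<subseteq> \<F>" "\<And>m n. m \<le> n \<Longrightarrow> U m \<subseteq> U n"
    "\<And>n \<W> z. U n \<subseteq> \<W> \<Longrightarrow> z \<in> K0 \<inter> \<Inter>\<W> \<Longrightarrow> \<delta> - inverse (Suc n) \<le> (norm z)\<^sup>2"
    "\<And>n \<W>. finite \<W> \<Longrightarrow> \<W> \<subseteq> \<F> \<Longrightarrow> \<exists>z\<in>K0 \<inter> \<Inter>\<W>. (norm z)\<^sup>2 \<le> \<delta> + inverse (Suc n)"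
proof -
  obtain \<delta> where near:
      "\<And>\<G> e. finite \<G> \<Longrightarrow> \<G> \<subseteq> \<F> \<Longrightarrow> 0 < e \<Longrightarrow> \<exists>z\<in>K0 \<inter> \<Inter>\<G>. (norm z)\<^sup>2 < \<delta> + e"
    and far: "\<And>e. 0 < e \<Longrightarrow> \<exists>\<G>. finite \<G> \<and> \<G> \<subseteq> \<F> \<and> (\<forall>z\<in>K0 \<inter> \<Inter>\<G>. \<delta> - e < (norm z)\<^sup>2)"
    using finite_subfamilies_min_norm_sup[of K0 \<F>, OF K0 fip] by metis
  obtain G where G: "\<And>n. finite (G n) \<and> G n \<subseteq> \<F>"
    and G_low: "\<And>n z. z \<in> K0 \<inter> \<Inter>(G n) \<Longrightarrow> \<delta> - inverse (Suc n) < (norm z)\<^sup>2"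
    using far[of "inverse (Suc _)"] by (metis inverse_positive_iff_positive of_nat_0_less_iff zero_less_Suc)
  define U where "U n = \<Union>(G ` {..n})" for n
  show ?thesis
  proof (rule that[of U \<delta>])
    show "finite (U n) \<and> U n \<subseteq> \<F>" for n unfolding U_def using G by auto
    show "U m \<subseteq> U n" if "m \<le> n" for m n unfolding U_def using that by (auto intro: order.trans)
    show "\<delta> - inverse (Suc n) \<le> (norm z)\<^sup>2" if "U n \<subseteq> \<W>" "z \<in> K0 \<inter> \<Inter>\<W>" for n \<W> z
    proof -
      have "G n \<subseteq> \<W>" using that(1) unfolding U_def by auto
      then show ?thesis using G_low[of z n] that(2) by fastforce
    qed
    show "\<exists>z\<in>K0 \<inter> \<Inter>\<W>. (norm z)\<^sup>2 \<le> \<delta> + inverse (Suc n)" if "finite \<W>" "\<W> \<subseteq> \<F>" for n \<W>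
      using near[OF that, of "inverse (Suc n)"] by (auto intro: less_imp_le)
  qed
qed

lemma bounded_closed_convex_fip:
  fixes K0 :: "'a::{real_inner,complete_space} set" and \<F> :: "'a set set"
  assumes K0: "bounded K0" "closed K0" "convex K0"
    and closed_convex: "\<And>K. K \<in> \<F> \<Longrightarrow> closed K \<and> convex K"
    and fip: "\<And>\<G>. finite \<G> \<Longrightarrow> \<G> \<subseteq> \<F> \<Longrightarrow> K0 \<inter> \<Inter>\<G> \<noteq> {}"
  shows "K0 \<inter> \<Inter>\<F> \<noteq> {}"
proof -
  obtain U \<delta> where U_fin: "\<And>n. finite (U n) \<and> U n \<subseteq> \<F>"
    and U_mono: "\<And>m n. m \<le> n \<Longrightarrow> U m \<subseteq> U n"
    and low: "\<And>n \<W> z. U n \<subseteq> \<W> \<Longrightarrow> z \<in> K0 \<inter> \<Inter>\<W> \<Longrightarrow> \<delta> - inverse (Suc n) \<le> (norm z)\<^sup>2"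
    and near: "\<And>n \<W>. finite \<W> \<Longrightarrow> \<W> \<subseteq> \<F> \<Longrightarrow> \<exists>z\<in>K0 \<inter> \<Inter>\<W>. (norm z)\<^sup>2 \<le> \<delta> + inverse (Suc n)"
    using finite_subfamilies_min_norm_chain[of K0 \<F>, OF K0(1) fip] by metis
  define S where "S \<G> = K0 \<inter> \<Inter>\<G>" for \<G>
  define e :: "nat \<Rightarrow> real" where "e n = inverse (Suc n)" for n
  note low = low[folded S_def e_def] and near = near[folded S_def e_def]
  have S_anti: "S \<G>' \<subseteq> S \<G>" if "\<G> \<subseteq> \<G>'" for \<G> \<G>'
    unfolding S_def using that by auto
  have nest: "\<exists>!a. \<forall>n. a \<in> S (W n) \<and> (norm a)\<^sup>2 \<le> \<delta> + e n"
    if W: "\<And>n. finite (W n) \<and> W n \<subseteq> \<F>" "\<And>n. U n \<subseteq> W n" "\<And>m n. m \<le> n \<Longrightarrow> W m \<subseteq> W n" for W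
  proof (rule nested_near_minimal_norm_Ex1)
    show "closed (S (W n))" for n
      unfolding S_def using K0 closed_convex W(1)[of n] by (auto intro!: closed_Int closed_Inter)
    show "convex (S (W n))" for n
      unfolding S_def using K0 closed_convex W(1)[of n] by (auto intro!: convex_Int convex_Inter)
    show "S (W n) \<subseteq> S (W m)" if "m \<le> n" for m n
      using S_anti W(3)[OF that] .
    show "\<delta> - e n \<le> (norm z)\<^sup>2" if "z \<in> S (W n)" for n z
      using low[OF W(2) that] .
    show "\<exists>z\<in>S (W n). (norm z)\<^sup>2 \<le> \<delta> + e n" for n
      using near W(1)[of n] by blast
    show "decseq e" unfolding e_def decseq_def by (simp add: le_imp_inverse_le)
    show "e \<longlonglongrightarrow> 0" unfolding e_def by (rule LIMSEQ_inverse_real_of_nat)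
  qed
  obtain a where a: "\<And>n. a \<in> S (U n) \<and> (norm a)\<^sup>2 \<le> \<delta> + e n"
    and a_unique: "\<And>b. (\<And>n. b \<in> S (U n) \<and> (norm b)\<^sup>2 \<le> \<delta> + e n) \<Longrightarrow> b = a"
    using nest[OF U_fin order.refl U_mono] by metis
  have "a \<in> K" if "K \<in> \<F>" for K
  proof -
    \<comment> \<open>The chain enlarged by K singles out a point of K, and that point also qualifies as a.\<close>
    have "\<exists>!a'. \<forall>n. a' \<in> S (insert K (U n)) \<and> (norm a')\<^sup>2 \<le> \<delta> + e n"
    proof (rule nest)
      show "finite (insert K (U n)) \<and> insert K (U n) \<subseteq> \<F>" for n using U_fin that by simp
      show "insert K (U m) \<subseteq> insert K (U n)" if "m \<le> n" for m n
        using U_mono[OF that] by blast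
    qed blast
    then obtain a' where a': "\<And>n. a' \<in> S (insert K (U n)) \<and> (norm a')\<^sup>2 \<le> \<delta> + e n"
      by blast
    have "a' \<in> S (U n)" for n
      using a'[of n] S_anti[OF subset_insertI] by blast
    then have "a' = a" using a' by (intro a_unique) simp
    then show ?thesis using a'[of 0] unfolding S_def by simp
  qed
  moreover have "a \<in> K0" using a[of 0] unfolding S_def by simp
  ultimately show ?thesis by blast
qed

section \<open>Minty's theorem\<close>

lemma monotone_op_diameter_balls_common_point:
  fixes A :: "'a::{real_inner,complete_space} \<Rightarrow> 'a set"
  assumes mono: "monotone_op A" and "0 < \<gamma>"
  shows "\<exists>p. \<forall>y v. v \<in> A y \<longrightarrow> 0 \<le> inner (p - y) ((w - \<gamma> *\<^sub>R v) - p)"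
proof -
  define Gr where "Gr = {(y, v). v \<in> A y}"
  define c :: "'a \<times> 'a \<Rightarrow> 'a" where "c yv = w - \<gamma> *\<^sub>R snd yv" for yv
  \<comment> \<open>p lies in the ball K (y, v) with diameter [y, w - \<gamma> v] iff (p, (w - p) / \<gamma>) is
    monotonically related to (y, v).\<close>
  define K :: "'a \<times> 'a \<Rightarrow> 'a set" where "K yv = {p. 0 \<le> inner (p - fst yv) (c yv - p)}" for yv
  have K_eq: "K yv = cball (midpoint (fst yv) (c yv)) (dist (fst yv) (c yv) / 2)" for yv
    unfolding K_def by (rule diameter_ball_eq)
  have anti: "inner (fst i - fst j) (c i - c j) \<le> 0" if "i \<in> Gr" "j \<in> Gr" for i j
  proof -
    have "0 \<le> inner (fst i - fst j) (\<gamma> *\<^sub>R snd i - \<gamma> *\<^sub>R snd j)"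
      using that mono \<open>0 < \<gamma>\<close>
      by (intro monotone_op_scaleR_image[of A \<gamma>]) (auto simp: Gr_def)
    then show ?thesis unfolding c_def by (simp add: inner_diff_right)
  qed
  have "\<exists>p. \<forall>yv\<in>Gr. p \<in> K yv"
  proof (cases "Gr = {}")
    case False
    then obtain yv0 where yv0: "yv0 \<in> Gr" by blast
    have "K yv0 \<inter> \<Inter>(K ` Gr) \<noteq> {}"
    proof (rule bounded_closed_convex_fip)
      show "bounded (K yv0)" "closed (K yv0)" "convex (K yv0)"
        unfolding K_eq by simp_all
      show "closed S \<and> convex S" if "S \<in> K ` Gr" for S
        using that unfolding K_eq by auto
      fix \<G> assume "finite \<G>" "\<G> \<subseteq> K ` Gr"
      then obtain C where C: "C \<subseteq> Gr" "finite C" "\<G> = K ` C"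
        by (meson finite_subset_image)
      have "insert yv0 C \<subseteq> Gr" using C yv0 by auto
      then have "\<exists>p. \<forall>yv\<in>insert yv0 C. 0 \<le> inner (p - fst yv) (c yv - p)"
        using C(2) anti by (intro diameter_balls_common_point) blast+
      then show "K yv0 \<inter> \<Inter>\<G> \<noteq> {}"
        unfolding C(3) K_def by auto
    qed
    then show ?thesis by blast
  qed simp
  then show ?thesis
    unfolding Gr_def K_def c_def by auto
qed

lemma maximally_monotone_minty:
  fixes A :: "'a::{real_inner,complete_space} \<Rightarrow> 'a set"
  assumes max: "maximally_monotone A" and "0 < \<gamma>"
  shows "\<exists>p. w - p \<in> (\<lambda>u. \<gamma> *\<^sub>R u) ` A p"
proof -
  obtain p where p: "\<And>y v. v \<in> A y \<Longrightarrow> 0 \<le> inner (p - y) ((w - \<gamma> *\<^sub>R v) - p)"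
    using monotone_op_diameter_balls_common_point[OF maximally_monotone_imp_monotone_op[OF max] \<open>0 < \<gamma>\<close>]
    by blast
  have "(1 / \<gamma>) *\<^sub>R (w - p) \<in> A p"
  proof -
    have "0 \<le> inner (p - y) ((1 / \<gamma>) *\<^sub>R (w - p) - v)" if "v \<in> A y" for y v
    proof -
      have "(1 / \<gamma>) *\<^sub>R (w - p) - v = (1 / \<gamma>) *\<^sub>R ((w - \<gamma> *\<^sub>R v) - p)"
        using \<open>0 < \<gamma>\<close> by (simp add: algebra_simps)
      then show ?thesis using p[OF that] \<open>0 < \<gamma>\<close> by simp
    qed
    then show ?thesis using max unfolding maximally_monotone_def by blast
  qed
  moreover have "w - p = \<gamma> *\<^sub>R ((1 / \<gamma>) *\<^sub>R (w - p))" using \<open>0 < \<gamma>\<close> by simp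
  ultimately show ?thesis by blast
qed

lemma resolvent_mem:
  fixes A :: "'a::{real_inner,complete_space} \<Rightarrow> 'a set"
  assumes max: "maximally_monotone A" and "0 < \<gamma>"
  shows "w - resolvent \<gamma> A w \<in> (\<lambda>u. \<gamma> *\<^sub>R u) ` A (resolvent \<gamma> A w)"
proof -
  have unique: "p = p'"
    if "w - p \<in> (\<lambda>u. \<gamma> *\<^sub>R u) ` A p" "w - p' \<in> (\<lambda>u. \<gamma> *\<^sub>R u) ` A p'" for p p'
  proof -
    have "0 \<le> inner (p - p') ((w - p) - (w - p'))"
      using maximally_monotone_imp_monotone_op[OF max] \<open>0 < \<gamma>\<close> that
      by (intro monotone_op_scaleR_image) auto
    also have "\<dots> = - inner (p - p') (p - p')"
      by (simp add: inner_diff_right inner_commute)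
    finally have "inner (p - p') (p - p') = 0"
      using inner_ge_zero[of "p - p'"] by linarith
    then show "p = p'" by simp
  qed
  have "\<exists>!p. w - p \<in> (\<lambda>u. \<gamma> *\<^sub>R u) ` A p"
    using maximally_monotone_minty[OF assms] unique by (rule ex_ex1I)
  then show ?thesis
    unfolding resolvent_def by (rule theI')
qed

lemma resolvent_inner_nonneg:
  fixes A :: "'a::{real_inner,complete_space} \<Rightarrow> 'a set"
  assumes "maximally_monotone A" "0 < \<gamma>" "u \<in> (\<lambda>a. \<gamma> *\<^sub>R a) ` A x"
  shows "0 \<le> inner (resolvent \<gamma> A w - x) ((w - resolvent \<gamma> A w) - u)"
  using resolvent_mem[OF assms(1,2)] assms
  by (intro monotone_op_scaleR_image[OF maximally_monotone_imp_monotone_op]) auto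

section \<open>The one-step estimate\<close>

lemma splitting_step_identity:
  fixes z z' x' y y' xs zs By By' By_prev Cy Bxs Cxs :: "'a::real_inner" and \<gamma> :: real
  assumes "z' = z + y' - x'"
  shows "(norm (z' - zs))\<^sup>2 + 2 * \<gamma> * inner (By' - By) (xs - y') + (norm (z' - z))\<^sup>2
      + 2 * inner (x' - xs) ((z - x') - (zs - xs))
      + 2 * inner (y' - xs) ((2 *\<^sub>R x' - z - (2 * \<gamma>) *\<^sub>R By + \<gamma> *\<^sub>R By_prev - \<gamma> *\<^sub>R Cy - y')
          - (xs - zs - \<gamma> *\<^sub>R Bxs - \<gamma> *\<^sub>R Cxs))
      + 2 * \<gamma> * inner (y' - xs) (By' - Bxs)
    = (norm (z - zs))\<^sup>2 + 2 * \<gamma> * inner (By - By_prev) (xs - y)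
      + 2 * \<gamma> * inner (By - By_prev) (y - y') + 2 * \<gamma> * inner (Cy - Cxs) (xs - y')"
  unfolding assms power2_norm_eq_inner
  by (simp add: inner_add_left inner_add_right inner_diff_left inner_diff_right inner_commute
      algebra_simps)

theorem lemma3p1:
  fixes A1 A2 :: "'a::{real_inner, complete_space} \<Rightarrow> 'a set"
    and B C :: "'a \<Rightarrow> 'a"
    and L \<beta> \<gamma> :: real
    and x y z :: "int \<Rightarrow> 'a"
    and xs zs :: 'a
  assumes "maximally_monotone A1" and "maximally_monotone A2"
    and "monotone_single B" and "L > 0" and "lipschitz_op L B"
    and "\<beta> > 0" and "cocoercive \<beta> C"
    and "\<gamma> > 0"
    and x_rec: "\<And>n. n \<ge> 0 \<Longrightarrow> x (n + 1) = resolvent \<gamma> A1 (z n)"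
    and y_rec: "\<And>n. n \<ge> 0 \<Longrightarrow> y (n + 1) = resolvent \<gamma> A2
              (2 *\<^sub>R x (n + 1) - z n - (2 * \<gamma>) *\<^sub>R B (y n) + \<gamma> *\<^sub>R B (y (n - 1)) - \<gamma> *\<^sub>R C (y n))"
    and z_rec: "\<And>n. n \<ge> 0 \<Longrightarrow> z (n + 1) = z n + y (n + 1) - x (n + 1)"
    and sol1: "zs - xs \<in> (\<lambda>u. \<gamma> *\<^sub>R u) ` A1 xs"
    and sol2: "xs - zs \<in> (\<lambda>u. \<gamma> *\<^sub>R u) ` {a + B xs + C xs | a. a \<in> A2 xs}"
  shows "\<forall>n::int. n \<ge> 0 \<longrightarrow>
    (norm (z (n + 1) - zs))\<^sup>2 + 2 * \<gamma> * inner (B (y (n + 1)) - B (y n)) (xs - y (n + 1))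
      + (norm (z (n + 1) - z n))\<^sup>2
    \<le> (norm (z n - zs))\<^sup>2 + 2 * \<gamma> * inner (B (y n) - B (y (n - 1))) (xs - y n)
      + 2 * \<gamma> * inner (B (y n) - B (y (n - 1))) (y n - y (n + 1))
      + 2 * \<gamma> * inner (C (y n) - C xs) (xs - y (n + 1))"
proof (intro allI impI)
  fix n :: int
  assume "0 \<le> n"
  define w where "w = 2 *\<^sub>R x (n + 1) - z n - (2 * \<gamma>) *\<^sub>R B (y n) + \<gamma> *\<^sub>R B (y (n - 1)) - \<gamma> *\<^sub>R C (y n)"
  have A1_step: "0 \<le> inner (x (n + 1) - xs) ((z n - x (n + 1)) - (zs - xs))"
    unfolding x_rec[OF \<open>0 \<le> n\<close>] by (rule resolvent_inner_nonneg[OF assms(1) \<open>\<gamma> > 0\<close> sol1])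
  have "xs - zs - \<gamma> *\<^sub>R B xs - \<gamma> *\<^sub>R C xs \<in> (\<lambda>u. \<gamma> *\<^sub>R u) ` A2 xs"
    using sol2 by (auto simp: scaleR_add_right)
  then have A2_step:
    "0 \<le> inner (y (n + 1) - xs) ((w - y (n + 1)) - (xs - zs - \<gamma> *\<^sub>R B xs - \<gamma> *\<^sub>R C xs))"
    unfolding y_rec[OF \<open>0 \<le> n\<close>] w_def by (rule resolvent_inner_nonneg[OF assms(2) \<open>\<gamma> > 0\<close>])
  have "0 \<le> \<gamma> * inner (y (n + 1) - xs) (B (y (n + 1)) - B xs)"
    using assms(3) \<open>\<gamma> > 0\<close> unfolding monotone_single_def by simp
  then show "(norm (z (n + 1) - zs))\<^sup>2 + 2 * \<gamma> * inner (B (y (n + 1)) - B (y n)) (xs - y (n + 1))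
      + (norm (z (n + 1) - z n))\<^sup>2
    \<le> (norm (z n - zs))\<^sup>2 + 2 * \<gamma> * inner (B (y n) - B (y (n - 1))) (xs - y n)
      + 2 * \<gamma> * inner (B (y n) - B (y (n - 1))) (y n - y (n + 1))
      + 2 * \<gamma> * inner (C (y n) - C xs) (xs - y (n + 1))"
    using splitting_step_identity[OF z_rec[OF \<open>0 \<le> n\<close>], where y = "y n" and xs = xs and zs = zs
        and By = "B (y n)" and By' = "B (y (n + 1))" and By_prev = "B (y (n - 1))"
        and Cy = "C (y n)" and Bxs = "B xs" and Cxs = "C xs" and \<gamma> = \<gamma>] A1_step A2_step
    unfolding w_def by linarith
qed

end
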